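(* Let $\alpha\ge0$ and let $P=\{p_0,p_1,\dots,p_k\}\subset\mathbb R^n$ with $p_0=0$ and $\|p_i\|\le\alpha$ for all $i$. Then for every $x\in\mathrm{CH}(P)$ there exists $p_i\in P$ with $\|x-p_i\|\le\alpha/\sqrt2$.
   Context: $\mathrm{CH}(P)$ denotes the convex hull of $P$; $\|\cdot\|$ is the Euclidean norm. *)

theory Defs
  imports "HOL-Analysis.Analysis"
begin

end

theory Submission
  imports Defs
begin

text \<open>If \<open>x = \<Sum>p\<in>P. u p *\<^sub>R p\<close> is a convex combination, the weighted mean of the squared
  distances \<open>\<parallel>x - p\<parallel>\<^sup>2\<close> equals the weighted mean of the \<open>\<parallel>p\<parallel>\<^sup>2\<close> minus \<open>\<parallel>x\<parallel>\<^sup>2\<close>. Hence some point of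
  \<open>P\<close> has squared distance at most \<open>\<alpha>\<^sup>2 - \<parallel>x\<parallel>\<^sup>2\<close> from \<open>x\<close>, while the point \<open>0\<close> has squared distance
  \<open>\<parallel>x\<parallel>\<^sup>2\<close>; one of these two numbers is at most \<open>\<alpha>\<^sup>2/2\<close>.\<close>

lemma sum_weighted_norm_diff_square:
  fixes x :: "'a::real_inner" and u :: "'a \<Rightarrow> real"
  assumes "sum u P = 1" and "(\<Sum>p\<in>P. u p *\<^sub>R p) = x"
  shows "(\<Sum>p\<in>P. u p * (norm (x - p))\<^sup>2) = (\<Sum>p\<in>P. u p * (norm p)\<^sup>2) - (norm x)\<^sup>2"
proof -
  have "(\<Sum>p\<in>P. u p * (norm (x - p))\<^sup>2)
      = (\<Sum>p\<in>P. u p * ((norm x)\<^sup>2 - 2 * (x \<bullet> p) + (norm p)\<^sup>2))"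
    by (intro sum.cong refl)
      (simp add: power2_norm_eq_inner inner_diff_left inner_diff_right inner_commute algebra_simps)
  also have "\<dots> = (norm x)\<^sup>2 * sum u P - 2 * (x \<bullet> (\<Sum>p\<in>P. u p *\<^sub>R p)) + (\<Sum>p\<in>P. u p * (norm p)\<^sup>2)"
    by (simp add: algebra_simps sum.distrib sum_subtractf sum_distrib_left sum_distrib_right
        inner_sum_right)
  finally show ?thesis
    using assms by (simp add: power2_norm_eq_inner)
qed

lemma exists_le_weighted_mean:
  fixes f u :: "'a \<Rightarrow> real"
  assumes "finite P" and "\<And>p. p \<in> P \<Longrightarrow> 0 \<le> u p" and "sum u P = 1"
  shows "\<exists>p\<in>P. f p \<le> (\<Sum>q\<in>P. u q * f q)"
proof (rule ccontr)
  define m where "m = (\<Sum>q\<in>P. u q * f q)"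
  assume "\<not> ?thesis"
  then have less: "\<And>p. p \<in> P \<Longrightarrow> m < f p"
    by (auto simp: m_def)
  obtain p where "p \<in> P" "u p \<noteq> 0"
    using assms(3) by (metis sum.neutral zero_neq_one)
  then have "u p * m < u p * f p"
    using assms(2) less by (simp add: order_le_neq_trans)
  moreover have "\<forall>q\<in>P. u q * m \<le> u q * f q"
    using assms(2) less by (simp add: mult_left_mono less_imp_le)
  ultimately have "(\<Sum>q\<in>P. u q * m) < (\<Sum>q\<in>P. u q * f q)"
    using \<open>p \<in> P\<close> assms(1) by (intro sum_strict_mono_ex1) auto
  then show False
    using assms(3) by (simp add: m_def flip: sum_distrib_right)
qed

lemma convex_hull_exists_close_point:
  fixes x :: "'a::real_inner"
  assumes "finite P" and "\<And>p. p \<in> P \<Longrightarrow> norm p \<le> \<alpha>" and "x \<in> convex hull P"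
  shows "\<exists>p\<in>P. (norm (x - p))\<^sup>2 \<le> \<alpha>\<^sup>2 - (norm x)\<^sup>2"
proof -
  obtain u where u_nonneg: "\<forall>p\<in>P. 0 \<le> u p" and u_sum: "sum u P = 1"
    and u_comb: "(\<Sum>p\<in>P. u p *\<^sub>R p) = x"
    using assms(3) unfolding convex_hull_finite[OF assms(1)] by blast
  obtain p where "p \<in> P" and p_le: "(norm (x - p))\<^sup>2 \<le> (\<Sum>q\<in>P. u q * (norm (x - q))\<^sup>2)"
    using exists_le_weighted_mean[OF assms(1), of u "\<lambda>q. (norm (x - q))\<^sup>2"] u_nonneg u_sum
    by blast
  have "(\<Sum>q\<in>P. u q * (norm q)\<^sup>2) \<le> (\<Sum>q\<in>P. u q * \<alpha>\<^sup>2)"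
    using u_nonneg assms(2) by (intro sum_mono mult_left_mono) (auto intro: power_mono)
  then have "(\<Sum>q\<in>P. u q * (norm (x - q))\<^sup>2) \<le> \<alpha>\<^sup>2 - (norm x)\<^sup>2"
    using u_sum by (simp add: sum_weighted_norm_diff_square[OF u_sum u_comb] flip: sum_distrib_right)
  with p_le have "(norm (x - p))\<^sup>2 \<le> \<alpha>\<^sup>2 - (norm x)\<^sup>2"
    by linarith
  with \<open>p \<in> P\<close> show ?thesis ..
qed

theorem lemma24:
  fixes P :: "(real ^ 'n) set" and \<alpha> :: real
  assumes "\<alpha> \<ge> 0"
    and "finite P"
    and "0 \<in> P"
    and "\<And>p. p \<in> P \<Longrightarrow> norm p \<le> \<alpha>"
    and "x \<in> convex hull P"
  shows "\<exists>p\<in>P. norm (x - p) \<le> \<alpha> / sqrt 2"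
proof -
  have bound: "sqrt (\<alpha>\<^sup>2 / 2) = \<alpha> / sqrt 2"
    using assms(1) by (simp add: real_sqrt_divide)
  obtain p where "p \<in> P" and p_close: "(norm (x - p))\<^sup>2 \<le> \<alpha>\<^sup>2 - (norm x)\<^sup>2"
    using convex_hull_exists_close_point[OF assms(2,4,5)] by blast
  show ?thesis
  proof (cases "(norm x)\<^sup>2 \<le> \<alpha>\<^sup>2 / 2")
    case True
    then have "norm (x - 0) \<le> \<alpha> / sqrt 2"
      by (metis bound diff_zero real_le_rsqrt)
    with assms(3) show ?thesis ..
  next
    case False
    with p_close have "(norm (x - p))\<^sup>2 \<le> \<alpha>\<^sup>2 / 2"
      by linarith
    then have "norm (x - p) \<le> \<alpha> / sqrt 2"
      by (metis bound real_le_rsqrt)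
    with \<open>p \<in> P\<close> show ?thesis ..
  qed
qed

end
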